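(* Let $k\ge 2$ and $d\in\{2,\dots,k\}$. For any $\alpha\in(0,1)$, any $\mu>1/k$ and any $\epsilon\in(0,\mu k-1)$, the random bipartite graph with $n$ variable vertices and $m=\lfloor\mu n\log n\rfloor$ constraint vertices has no $\alpha$-small $d$-stopping set with probability $1-O(n^{1-\mu k+\epsilon})$ as $n\to\infty$.
   Context: Random bipartite graph: variable vertices $[n]$, constraint vertices $[m]$; for each $a\in[m]$ independently, a $k$-tuple of pairwise distinct elements of $[n]$ is chosen uniformly among all $n(n-1)\cdots(n-k+1)$ such tuples, and $\partial(a)\subseteq[n]$ denotes the set of its entries (the neighbours of $a$). $d$-stopping set: a set $V'\subseteq[n]$ such that $|\partial(a)\cap V'|\notin\{1,2,\dots,d-1\}$ for every $a\in[m]$. For $\alpha\in(0,1)$, an $\alpha$-small $d$-stopping set is a nonempty $d$-stopping set of size smaller than $\alpha n$. *)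

theory Defs
  imports "HOL-Probability.Probability" "HOL-Library.Landau_Symbols"
begin

text \<open>Variable vertices are 0..<n, constraint vertices 0..<m, tuple positions 0..<k.
  A k-tuple of pairwise distinct elements of [n] is an injective map {0..<k} -> {0..<n}.\<close>
definition tuples :: "nat \<Rightarrow> nat \<Rightarrow> (nat \<Rightarrow> nat) set" where
  "tuples n k = {t \<in> {0..<k} \<rightarrow>\<^sub>E {0..<n}. inj_on t {0..<k}}"

text \<open>Sample space: each constraint a gets a k-tuple; uniform distribution on this product
  set is the same as independent uniform choices for each a.\<close>
definition graphs :: "nat \<Rightarrow> nat \<Rightarrow> nat \<Rightarrow> (nat \<Rightarrow> nat \<Rightarrow> nat) set" where
  "graphs n m k = {0..<m} \<rightarrow>\<^sub>E tuples n k"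

definition random_graph :: "nat \<Rightarrow> nat \<Rightarrow> nat \<Rightarrow> (nat \<Rightarrow> nat \<Rightarrow> nat) pmf" where
  "random_graph n m k = pmf_of_set (graphs n m k)"

definition nbrs :: "(nat \<Rightarrow> nat \<Rightarrow> nat) \<Rightarrow> nat \<Rightarrow> nat \<Rightarrow> nat set" where
  "nbrs G k a = G a ` {0..<k}"

definition stopping_set :: "nat \<Rightarrow> nat \<Rightarrow> nat \<Rightarrow> nat \<Rightarrow> (nat \<Rightarrow> nat \<Rightarrow> nat) \<Rightarrow> nat set \<Rightarrow> bool" where
  "stopping_set n m k d G V \<longleftrightarrow> V \<subseteq> {0..<n} \<and>
     (\<forall>a<m. card (nbrs G k a \<inter> V) \<notin> {1..<d})"

definition small_stopping_set :: "nat \<Rightarrow> nat \<Rightarrow> nat \<Rightarrow> nat \<Rightarrow> real \<Rightarrow> (nat \<Rightarrow> nat \<Rightarrow> nat) \<Rightarrow> nat set \<Rightarrow> bool" where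
  "small_stopping_set n m k d \<alpha> G V \<longleftrightarrow>
     stopping_set n m k d G V \<and> V \<noteq> {} \<and> real (card V) < \<alpha> * real n"

end

theory Submission
  imports Defs "HOL-Real_Asymp.Real_Asymp"
begin

text \<open>
  Fix a nonempty candidate set
  \<open>V \<subseteq> [n]\<close> of size \<open>s < \<alpha>n\<close>.  A uniformly random \<open>k\<close>-tuple of distinct variables meets
  \<open>V\<close> in exactly one element with probability at least
  \<open>x(s) = k s (n - s - k)^(k-1) / n^k\<close> (the "escape rate"), and such a constraint alone
  destroys the \<open>d\<close>-stopping property of \<open>V\<close>.  As the \<open>m\<close> constraints are independent,
  \<open>V\<close> is a stopping set with probability at most \<open>(1 - x(s))^m \<le> exp (-x(s) m)\<close>, and the
  probability of a small stopping set is at most the sum of these bounds over all candidates.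

  The sum is split at \<open>s = \<delta>n\<close>.  For small sets \<open>x(s) m \<ge> s \<kappa> \<mu> ln n - k\<close> with
  \<open>\<kappa> = k (1 - 2\<delta>)^(k-1)\<close>, so the sum is dominated by \<open>(1 + n^(-\<kappa>\<mu>))^n - 1 = O(n^(1-\<kappa>\<mu>))\<close>;
  for large sets \<open>x(s) \<ge> c > 0\<close>, so each term is \<open>O(exp (-c \<mu> n ln n))\<close>, which beats the
  \<open>2^n\<close> candidates.  Finally \<open>\<delta>\<close> is chosen so small that \<open>\<kappa>\<mu> \<ge> \<mu>k - \<epsilon>\<close>.
\<close>

lemma finite_tuples: "finite (tuples n k)"
  unfolding tuples_def by (rule finite_subset[of _ "{0..<k} \<rightarrow>\<^sub>E {0..<n}"]) (auto intro: finite_PiE)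

lemma card_tuples_le: "card (tuples n k) \<le> n ^ k"
proof -
  have "card (tuples n k) \<le> card ({0..<k} \<rightarrow>\<^sub>E {0..<n})"
    unfolding tuples_def by (rule card_mono) (auto intro: finite_PiE)
  then show ?thesis by (simp add: card_funcsetE)
qed

lemma card_tuples_pos:
  assumes "k \<le> n"
  shows "0 < card (tuples n k)"
proof -
  have "card (tuples n k) = (\<Prod>j\<in>{0..<k}. n - j)"
    unfolding tuples_def using card_inj_on_subset_funcset[of "{0..<k}" "{0..<n}" "{0..<k}"] by simp
  then show ?thesis using assms by (auto simp: prod_pos)
qed

definition single_hit_tuples :: "nat \<Rightarrow> nat \<Rightarrow> nat set \<Rightarrow> (nat \<Rightarrow> nat) set" where
  "single_hit_tuples n k V = {t \<in> tuples n k. card (t ` {0..<k} \<inter> V) = 1}"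

definition hit_at :: "nat \<Rightarrow> nat \<Rightarrow> nat set \<Rightarrow> nat \<Rightarrow> (nat \<Rightarrow> nat) set" where
  "hit_at n k V i = {t \<in> tuples n k. t i \<in> V \<and> (\<forall>j\<in>{0..<k} - {i}. t j \<notin> V)}"

lemma hit_at_subset:
  assumes "i < k"
  shows "hit_at n k V i \<subseteq> single_hit_tuples n k V"
proof
  fix t assume t: "t \<in> hit_at n k V i"
  then have "t ` {0..<k} \<inter> V = {t i}"
    using assms unfolding hit_at_def by auto
  then show "t \<in> single_hit_tuples n k V"
    using t unfolding hit_at_def single_hit_tuples_def by simp
qed

lemma hit_at_disjoint:
  assumes "i < k" "j < k" "i \<noteq> j"
  shows "hit_at n k V i \<inter> hit_at n k V j = {}"
  using assms unfolding hit_at_def by auto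

lemma inj_on_fun_upd_extensional:
  assumes "i \<notin> D"
  shows "inj_on (\<lambda>(v, g). g(i := v)) (X \<times> (D \<rightarrow>\<^sub>E Y))"
proof (rule inj_onI, clarify)
  fix v g v' g'
  assume g: "g \<in> D \<rightarrow>\<^sub>E Y" and g': "g' \<in> D \<rightarrow>\<^sub>E Y" and eq: "g(i := v) = g'(i := v')"
  have "v = v'" using fun_cong[OF eq, of i] by simp
  moreover have "g x = g' x" for x
  proof (cases "x = i")
    case True
    then show ?thesis using PiE_arb[OF g] PiE_arb[OF g'] assms by metis
  next
    case False
    then show ?thesis using fun_cong[OF eq, of x] by simp
  qed
  ultimately show "v = v' \<and> g = g'" by auto
qed

lemma fun_upd_in_hit_at:
  assumes V: "V \<subseteq> {0..<n}" and i: "i < k" and v: "v \<in> V"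
    and g: "g \<in> ({0..<k} - {i}) \<rightarrow>\<^sub>E ({0..<n} - V)" "inj_on g ({0..<k} - {i})"
  shows "g(i := v) \<in> hit_at n k V i"
proof -
  define D where "D = {0..<k} - {i}"
  have iD: "i \<notin> D" and kD: "{0..<k} = insert i D" using i by (auto simp: D_def)
  have gD: "g ` D \<subseteq> {0..<n} - V" and g_ext: "\<And>j. j \<notin> D \<Longrightarrow> g j = undefined"
    using g(1) by (auto simp: D_def PiE_def extensional_def)
  have v_new: "v \<notin> g ` D" using v gD by auto
  have "g(i := v) \<in> {0..<k} \<rightarrow>\<^sub>E {0..<n}"
  proof (rule PiE_I)
    fix j assume "j \<in> {0..<k}"
    then show "(g(i := v)) j \<in> {0..<n}" using v V gD kD by (cases "j = i") auto
  next
    fix j assume "j \<notin> {0..<k}"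
    then show "(g(i := v)) j = undefined" using kD g_ext by auto
  qed
  moreover have "g(i := v) ` D = g ` D" using iD by auto
  then have "inj_on (g(i := v)) {0..<k}"
    unfolding kD using inj_on_fun_updI[OF g(2)[folded D_def] v_new] v_new iD by simp
  moreover have "\<forall>j\<in>{0..<k} - {i}. g j \<notin> V" using gD by (auto simp: D_def)
  ultimately show ?thesis using v unfolding hit_at_def tuples_def by simp
qed

(* Counting the tuples of the previous lemma: |V| choices for the hit, at least (n-|V|-k)^(k-1) for the rest. *)
lemma card_hit_at_ge:
  assumes V: "V \<subseteq> {0..<n}" and i: "i < k"
  shows "card V * (n - card V - k) ^ (k - 1) \<le> card (hit_at n k V i)"
proof -
  define D where "D = {0..<k} - {i}"
  define C where "C = {0..<n} - V"
  define G where "G = {g \<in> D \<rightarrow>\<^sub>E C. inj_on g D}"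
  have "card G = (\<Prod>j\<in>{0..<k-1}. (n - card V) - j)"
  proof -
    have "card D = k - 1" "card C = n - card V"
      unfolding D_def C_def using i V by (simp_all add: card_Diff_subset finite_subset)
    then show ?thesis
      unfolding G_def using card_inj_on_subset_funcset[of D C D] by (simp add: D_def C_def)
  qed
  moreover have "(\<Prod>j\<in>{0..<k-1}. n - card V - k) \<le> (\<Prod>j\<in>{0..<k-1}. (n - card V) - j)"
    by (rule prod_mono) auto
  ultimately have card_G: "(n - card V - k) ^ (k - 1) \<le> card G" by simp
  have inj: "inj_on (\<lambda>(v, g). g(i := v)) (V \<times> G)"
    by (rule inj_on_subset[OF inj_on_fun_upd_extensional[of i D V C]]) (auto simp: D_def G_def)
  have image: "(\<lambda>(v, g). g(i := v)) ` (V \<times> G) \<subseteq> hit_at n k V i"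
    using fun_upd_in_hit_at[OF V i] by (auto simp: G_def D_def C_def)
  have "card V * (n - card V - k) ^ (k - 1) \<le> card V * card G"
    by (rule mult_le_mono2[OF card_G])
  also have "\<dots> = card (V \<times> G)" by (simp add: card_cartesian_product)
  also have "\<dots> \<le> card (hit_at n k V i)"
    by (rule card_inj_on_le[OF inj image]) (simp add: hit_at_def finite_tuples)
  finally show ?thesis .
qed

(* Summing over the k positions of the hit. *)
lemma card_single_hit_ge:
  assumes "V \<subseteq> {0..<n}"
  shows "k * card V * (n - card V - k) ^ (k - 1) \<le> card (single_hit_tuples n k V)"
proof -
  have "k * card V * (n - card V - k) ^ (k - 1)
      = (\<Sum>i\<in>{0..<k}. card V * (n - card V - k) ^ (k - 1))" by simp
  also have "\<dots> \<le> (\<Sum>i\<in>{0..<k}. card (hit_at n k V i))"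
    by (rule sum_mono) (use card_hit_at_ge[OF assms] in simp)
  also have "\<dots> = card (\<Union>i\<in>{0..<k}. hit_at n k V i)"
    by (rule card_UN_disjoint[symmetric]) (auto simp: hit_at_def finite_tuples)
  also have "\<dots> \<le> card (single_hit_tuples n k V)"
    by (intro card_mono UN_least hit_at_subset) (auto simp: single_hit_tuples_def finite_tuples)
  finally show ?thesis .
qed

definition allowed_tuples :: "nat \<Rightarrow> nat \<Rightarrow> nat \<Rightarrow> nat set \<Rightarrow> (nat \<Rightarrow> nat) set" where
  "allowed_tuples n k d V = {t \<in> tuples n k. card (t ` {0..<k} \<inter> V) \<notin> {1..<d}}"

definition allowed_fraction :: "nat \<Rightarrow> nat \<Rightarrow> nat \<Rightarrow> nat set \<Rightarrow> real" where
  "allowed_fraction n k d V = real (card (allowed_tuples n k d V)) / real (card (tuples n k))"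

(* Lower bound for the probability that a random tuple meets a set of size s exactly once. *)
definition escape_rate :: "nat \<Rightarrow> nat \<Rightarrow> nat \<Rightarrow> real" where
  "escape_rate n k s = real k * real s * real (n - s - k) ^ (k - 1) / real n ^ k"

lemma allowed_fraction_pow_le:
  assumes d: "2 \<le> d" and V: "V \<subseteq> {0..<n}" and kn: "k \<le> n"
  shows "allowed_fraction n k d V ^ m \<le> exp (- escape_rate n k (card V) * real m)"
proof -
  define a where "a = real (card (allowed_tuples n k d V))"
  define b where "b = real (card (single_hit_tuples n k V))"
  define T where "T = real (card (tuples n k))"
  define x where "x = escape_rate n k (card V)"
  have T_pos: "T > 0" unfolding T_def using card_tuples_pos[OF kn] by simp
  have "card (allowed_tuples n k d V) + card (single_hit_tuples n k V)
      = card (allowed_tuples n k d V \<union> single_hit_tuples n k V)"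
    by (rule card_Un_disjoint[symmetric])
       (use finite_tuples d in \<open>auto simp: allowed_tuples_def single_hit_tuples_def\<close>)
  also have "\<dots> \<le> card (tuples n k)"
    by (rule card_mono) (auto simp: finite_tuples allowed_tuples_def single_hit_tuples_def)
  finally have abT: "a + b \<le> T" unfolding a_def b_def T_def by linarith
  have "x \<le> b / real n ^ k"
    unfolding x_def escape_rate_def b_def using card_single_hit_ge[OF V, of k]
    by (intro divide_right_mono) (simp_all flip: of_nat_mult of_nat_power)
  also have "\<dots> \<le> b / T"
  proof -
    have "T \<le> real n ^ k" unfolding T_def using card_tuples_le[of n k] by (simp flip: of_nat_power)
    moreover have "0 < real n ^ k * T" using calculation T_pos by (metis mult_pos_pos order_less_le_trans)
    ultimately show ?thesis by (intro divide_left_mono) (simp_all add: b_def)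
  qed
  finally have "a / T \<le> 1 - x" using abT T_pos by (simp add: field_simps)
  also have "\<dots> \<le> exp (- x)" using exp_ge_add_one_self[of "-x"] by simp
  finally have "(a / T) ^ m \<le> exp (- x) ^ m"
    by (rule power_mono) (simp add: a_def T_def)
  also have "\<dots> = exp (- x * real m)" by (simp flip: exp_of_nat_mult add: mult.commute)
  finally show ?thesis unfolding allowed_fraction_def a_def T_def x_def .
qed

definition candidate_sets :: "nat \<Rightarrow> real \<Rightarrow> nat set set" where
  "candidate_sets n \<alpha> = {V. V \<subseteq> {0..<n} \<and> V \<noteq> {} \<and> real (card V) < \<alpha> * real n}"

lemma finite_candidate_sets: "finite (candidate_sets n \<alpha>)"
  unfolding candidate_sets_def by (rule finite_subset[of _ "Pow {0..<n}"]) auto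

(* Union bound: the event is covered by the events that V is a stopping set, V ranging over candidates. *)
lemma prob_small_stopping_set_le:
  assumes kn: "k \<le> n"
  shows "measure_pmf.prob (random_graph n m k) {G. \<exists>V. small_stopping_set n m k d \<alpha> G V}
    \<le> (\<Sum>V\<in>candidate_sets n \<alpha>. allowed_fraction n k d V ^ m)"
proof -
  define W where "W = candidate_sets n \<alpha>"
  define E where "E = {G. \<exists>V. small_stopping_set n m k d \<alpha> G V}"
  define S where "S = graphs n m k"
  have finS: "finite S" unfolding S_def graphs_def using finite_tuples by (intro finite_PiE) auto
  have cardS: "card S = card (tuples n k) ^ m" unfolding S_def graphs_def by (simp add: card_funcsetE)
  then have "S \<noteq> {}" using card_tuples_pos[OF kn] by (metis card.empty power_not_zero neq0_conv)
  then have prob: "measure_pmf.prob (random_graph n m k) E = card (S \<inter> E) / card S"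
    unfolding random_graph_def S_def by (rule measure_pmf_of_set) (use finS S_def in simp)
  have cover: "S \<inter> E \<subseteq> (\<Union>V\<in>W. {0..<m} \<rightarrow>\<^sub>E allowed_tuples n k d V)"
  proof
    fix G assume "G \<in> S \<inter> E"
    then obtain V where G: "G \<in> {0..<m} \<rightarrow>\<^sub>E tuples n k" and ss: "small_stopping_set n m k d \<alpha> G V"
      unfolding S_def E_def graphs_def by auto
    have "V \<in> W"
      using ss unfolding W_def candidate_sets_def small_stopping_set_def stopping_set_def by auto
    moreover have "G \<in> {0..<m} \<rightarrow>\<^sub>E allowed_tuples n k d V"
      using G ss unfolding allowed_tuples_def small_stopping_set_def stopping_set_def nbrs_def
      by (auto simp: PiE_iff)
    ultimately show "G \<in> (\<Union>V\<in>W. {0..<m} \<rightarrow>\<^sub>E allowed_tuples n k d V)" by blast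
  qed
  have "card (S \<inter> E) \<le> card (\<Union>V\<in>W. {0..<m} \<rightarrow>\<^sub>E allowed_tuples n k d V)"
    by (rule card_mono[OF _ cover])
       (use finite_candidate_sets finite_tuples in \<open>auto simp: W_def allowed_tuples_def intro!: finite_PiE\<close>)
  also have "\<dots> \<le> (\<Sum>V\<in>W. card ({0..<m} \<rightarrow>\<^sub>E allowed_tuples n k d V))"
    by (rule card_UN_le) (simp add: W_def finite_candidate_sets)
  also have "\<dots> = (\<Sum>V\<in>W. card (allowed_tuples n k d V) ^ m)" by (simp add: card_funcsetE)
  finally have "real (card (S \<inter> E)) \<le> real (\<Sum>V\<in>W. card (allowed_tuples n k d V) ^ m)"
    by (simp only: of_nat_le_iff)
  then have "real (card (S \<inter> E)) \<le> (\<Sum>V\<in>W. real (card (allowed_tuples n k d V)) ^ m)"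
    by simp
  then have "measure_pmf.prob (random_graph n m k) E
      \<le> (\<Sum>V\<in>W. real (card (allowed_tuples n k d V)) ^ m) / real (card S)"
    unfolding prob by (simp add: divide_right_mono)
  also have "\<dots> = (\<Sum>V\<in>W. allowed_fraction n k d V ^ m)"
    unfolding cardS allowed_fraction_def by (simp add: sum_divide_distrib power_divide)
  finally show ?thesis unfolding W_def E_def .
qed

lemma escape_rate_ge:
  assumes n: "0 < n" and k: "1 \<le> k" and \<beta>: "0 \<le> \<beta>" "\<beta> * real n \<le> real (n - s - k)"
  shows "real k * real s * \<beta> ^ (k - 1) / real n \<le> escape_rate n k s"
proof -
  have "(\<beta> * real n) ^ (k - 1) \<le> real (n - s - k) ^ (k - 1)"
    by (rule power_mono) (use \<beta> n in auto)
  then have "real k * real s * \<beta> ^ (k - 1) * real n ^ (k - 1) \<le> real k * real s * real (n - s - k) ^ (k - 1)"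
    by (simp add: power_mult_distrib mult_left_mono mult.assoc)
  moreover have "real n ^ k = real n * real n ^ (k - 1)"
    using k by (metis Suc_diff_1 le_less_trans less_one linorder_not_le power_Suc)
  ultimately show ?thesis
    unfolding escape_rate_def using n by (simp add: field_simps)
qed

lemma nat_floor_ge: "0 \<le> x \<Longrightarrow> x - 1 \<le> real (nat \<lfloor>x\<rfloor>)"
  by linarith

lemma exp_neg_mult_le:
  fixes x y L m :: real
  assumes "0 \<le> y" "y \<le> x" "L - 1 \<le> m" "0 \<le> m"
  shows "exp (- x * m) \<le> exp y * exp (- y * L)"
proof -
  have "- x * m \<le> - y * m" using assms by (simp add: mult_right_mono)
  also have "\<dots> \<le> y + - y * L" using mult_left_mono[OF assms(3,1)] by (simp add: algebra_simps)
  finally show ?thesis by (simp flip: exp_add)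
qed

lemma sum_nonempty_subsets_pow_le:
  fixes \<rho> :: real
  assumes A: "finite A" and \<rho>: "0 \<le> \<rho>" "real (card A) * \<rho> \<le> 1/2"
  shows "(\<Sum>V\<in>Pow A - {{}}. \<rho> ^ card V) \<le> 2 * (real (card A) * \<rho>)"
proof -
  have "(\<Sum>V\<in>Pow A. \<rho> ^ card V) = (1 + \<rho>) ^ card A"
    using prod_add[OF A, of "\<lambda>_. \<rho>" "\<lambda>_. 1"] by (simp add: add.commute)
  also have "\<dots> \<le> exp \<rho> ^ card A"
    using \<rho> by (intro power_mono) (auto simp: add.commute)
  also have "\<dots> = exp (real (card A) * \<rho>)" by (simp add: exp_of_nat_mult)
  also have "\<dots> \<le> 1 + 2 * (real (card A) * \<rho>)"
    using exp_bound_lemma[of "real (card A) * \<rho>"] \<rho> by simp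
  finally show ?thesis using A by (simp add: sum_diff1)
qed

lemma small_set_bound:
  fixes k d n m :: nat and \<mu> \<delta> :: real
  defines "\<kappa> \<equiv> real k * (1 - 2 * \<delta>) ^ (k - 1)"
  assumes d: "2 \<le> d" and k: "1 \<le> k" and \<mu>: "0 < \<mu>" and \<delta>: "0 < \<delta>" "\<delta> \<le> 1/4"
    and n: "2 \<le> n" and k_le: "real k \<le> \<delta> * real n"
    and V: "V \<subseteq> {0..<n}" "real (card V) \<le> \<delta> * real n"
    and m: "\<mu> * real n * ln (real n) - 1 \<le> real m"
  shows "allowed_fraction n k d V ^ m \<le> exp (real k) * (real n powr (- (\<kappa> * \<mu>))) ^ card V"
proof -
  define s where "s = card V"
  define y where "y = real s * \<kappa> / real n"
  have n_pos: "0 < real n" using n by simp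
  have "\<delta> * real n \<le> real n / 4" using \<delta> n_pos by (simp add: mult_right_mono)
  then have s_k: "real s + real k \<le> real n / 2"
    using V(2) k_le unfolding s_def by linarith
  then have "real (n - s - k) = real n - real s - real k" by (simp add: of_nat_diff)
  then have \<beta>: "(1 - 2 * \<delta>) * real n \<le> real (n - s - k)"
    using V(2) k_le unfolding s_def by (simp add: algebra_simps)
  have \<kappa>: "0 \<le> \<kappa>" "\<kappa> \<le> real k"
    unfolding \<kappa>_def using \<delta> by (auto intro!: mult_left_le power_le_one)
  have "y \<le> escape_rate n k s"
    using escape_rate_ge[of n k "1 - 2 * \<delta>" s] n k \<delta> \<beta> unfolding y_def \<kappa>_def by (simp add: mult_ac)
  moreover have "0 \<le> y" unfolding y_def using \<kappa> by simp
  ultimately have "exp (- escape_rate n k s * real m) \<le> exp y * exp (- y * (\<mu> * real n * ln (real n)))"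
    using m by (intro exp_neg_mult_le) auto
  also have "\<dots> \<le> exp (real k) * (real n powr (- (\<kappa> * \<mu>))) ^ s"
  proof (intro mult_mono)
    have "real s * \<kappa> \<le> real n * real k" using s_k \<kappa> by (intro mult_mono) auto
    then show "exp y \<le> exp (real k)" unfolding y_def using n_pos by (simp add: field_simps)
    have "(real n powr (- (\<kappa> * \<mu>))) ^ s = exp (real s * (- (\<kappa> * \<mu>) * ln (real n)))"
      using n_pos by (simp only: powr_def exp_of_nat_mult) simp
    moreover have "- y * (\<mu> * real n * ln (real n)) = real s * (- (\<kappa> * \<mu>) * ln (real n))"
      unfolding y_def using n_pos by (simp add: field_simps)
    ultimately show "exp (- y * (\<mu> * real n * ln (real n))) \<le> (real n powr (- (\<kappa> * \<mu>))) ^ s"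
      by (metis order_refl)
  qed auto
  finally have "exp (- escape_rate n k s * real m) \<le> exp (real k) * (real n powr (- (\<kappa> * \<mu>))) ^ s" .
  moreover have "k \<le> n" using s_k by linarith
  ultimately show ?thesis
    using allowed_fraction_pow_le[OF d V(1), of k m] unfolding s_def by linarith
qed

lemma large_set_bound:
  fixes k d n m :: nat and \<alpha> \<mu> \<delta> :: real
  defines "c \<equiv> real k * \<delta> * ((1 - \<alpha>) / 2) ^ (k - 1)"
  assumes d: "2 \<le> d" and k: "1 \<le> k" and \<alpha>: "\<alpha> < 1" and \<mu>: "0 < \<mu>" and \<delta>: "0 < \<delta>"
    and n: "2 \<le> n" and k_le: "real k \<le> (1 - \<alpha>) / 2 * real n"
    and V: "V \<subseteq> {0..<n}" "\<delta> * real n < real (card V)" "real (card V) < \<alpha> * real n"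
    and m: "\<mu> * real n * ln (real n) - 1 \<le> real m"
  shows "allowed_fraction n k d V ^ m \<le> exp c * exp (- c * (\<mu> * real n * ln (real n)))"
proof -
  define s where "s = card V"
  define \<beta> where "\<beta> = (1 - \<alpha>) / 2"
  have n_pos: "0 < real n" using n by simp
  have "\<alpha> * real n \<le> real n" using \<alpha> n_pos by (simp add: mult_right_mono)
  then have s_k: "real s + real k + \<beta> * real n \<le> real n"
    using V(3) k_le unfolding s_def \<beta>_def by (simp add: field_simps)
  moreover have "0 \<le> \<beta> * real n" using \<alpha> n_pos by (simp add: \<beta>_def)
  ultimately have "real (s + k) \<le> real n" by simp
  then have s_k_nat: "s + k \<le> n" by (simp only: of_nat_le_iff)
  then have "real (n - s - k) = real n - real s - real k" by (simp add: of_nat_diff)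
  then have "\<beta> * real n \<le> real (n - s - k)" using s_k by linarith
  then have "real k * real s * \<beta> ^ (k - 1) / real n \<le> escape_rate n k s"
    using \<alpha> n k by (intro escape_rate_ge) (auto simp: \<beta>_def)
  moreover have "c \<le> real k * real s * \<beta> ^ (k - 1) / real n"
  proof -
    have "real k * (\<delta> * real n) * \<beta> ^ (k - 1) \<le> real k * real s * \<beta> ^ (k - 1)"
      using V(2) \<alpha> unfolding s_def \<beta>_def by (intro mult_right_mono mult_left_mono) auto
    then show ?thesis unfolding c_def \<beta>_def using n_pos by (simp add: field_simps)
  qed
  moreover have "0 \<le> c" unfolding c_def using \<alpha> \<delta> by simp
  ultimately have "exp (- escape_rate n k s * real m) \<le> exp c * exp (- c * (\<mu> * real n * ln (real n)))"
    using m by (intro exp_neg_mult_le) auto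
  moreover have "k \<le> n" using s_k_nat by simp
  ultimately show ?thesis
    using allowed_fraction_pow_le[OF d V(1), of k m] unfolding s_def by linarith
qed

lemma sum_small_sets_le:
  fixes k d n m :: nat and \<alpha> \<mu> \<delta> :: real
  defines "\<kappa> \<equiv> real k * (1 - 2 * \<delta>) ^ (k - 1)"
  assumes d: "2 \<le> d" and k: "1 \<le> k" and \<mu>: "0 < \<mu>" and \<delta>: "0 < \<delta>" "\<delta> \<le> 1/4"
    and n: "2 \<le> n" and k_le: "real k \<le> \<delta> * real n"
    and m: "\<mu> * real n * ln (real n) - 1 \<le> real m"
    and small: "real n powr (1 - \<kappa> * \<mu>) \<le> 1/2"
  shows "(\<Sum>V\<in>{V \<in> candidate_sets n \<alpha>. real (card V) \<le> \<delta> * real n}. allowed_fraction n k d V ^ m)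
    \<le> 2 * exp (real k) * real n powr (1 - \<kappa> * \<mu>)"
proof -
  define \<rho> where "\<rho> = real n powr (- (\<kappa> * \<mu>))"
  have n\<rho>: "real n * \<rho> = real n powr (1 - \<kappa> * \<mu>)"
    unfolding \<rho>_def using n by (simp add: powr_diff powr_minus divide_inverse)
  have "(\<Sum>V\<in>{V \<in> candidate_sets n \<alpha>. real (card V) \<le> \<delta> * real n}. allowed_fraction n k d V ^ m)
      \<le> (\<Sum>V\<in>{V \<in> candidate_sets n \<alpha>. real (card V) \<le> \<delta> * real n}. exp (real k) * \<rho> ^ card V)"
  proof (rule sum_mono)
    fix V assume "V \<in> {V \<in> candidate_sets n \<alpha>. real (card V) \<le> \<delta> * real n}"
    then have "V \<subseteq> {0..<n}" "real (card V) \<le> \<delta> * real n" by (auto simp: candidate_sets_def)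
    from small_set_bound[OF d k \<mu> \<delta> n k_le this m]
    show "allowed_fraction n k d V ^ m \<le> exp (real k) * \<rho> ^ card V"
      unfolding \<rho>_def \<kappa>_def .
  qed
  also have "\<dots> \<le> (\<Sum>V\<in>Pow {0..<n} - {{}}. exp (real k) * \<rho> ^ card V)"
    by (rule sum_mono2) (auto simp: candidate_sets_def \<rho>_def)
  also have "\<dots> = exp (real k) * (\<Sum>V\<in>Pow {0..<n} - {{}}. \<rho> ^ card V)"
    by (simp add: sum_distrib_left)
  also have "\<dots> \<le> exp (real k) * (2 * (real n * \<rho>))"
    using sum_nonempty_subsets_pow_le[of "{0..<n}" \<rho>] small n\<rho> by (simp add: \<rho>_def)
  finally show ?thesis unfolding n\<rho> by simp
qed

lemma prob_small_stopping_set_bound: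
  fixes k d n :: nat and \<alpha> \<mu> \<delta> :: real
  defines "m \<equiv> nat \<lfloor>\<mu> * real n * ln (real n)\<rfloor>"
    and "\<kappa> \<equiv> real k * (1 - 2 * \<delta>) ^ (k - 1)"
    and "c \<equiv> real k * \<delta> * ((1 - \<alpha>) / 2) ^ (k - 1)"
  assumes d: "2 \<le> d" and k: "1 \<le> k" and \<alpha>: "\<alpha> < 1" and \<mu>: "0 < \<mu>"
    and \<delta>: "0 < \<delta>" "\<delta> \<le> 1/4" and n: "2 \<le> n"
    and k_le: "real k \<le> \<delta> * real n" "real k \<le> (1 - \<alpha>) / 2 * real n"
    and small: "real n powr (1 - \<kappa> * \<mu>) \<le> 1/2"
  shows "measure_pmf.prob (random_graph n m k) {G. \<exists>V. small_stopping_set n m k d \<alpha> G V}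
    \<le> 2 * exp (real k) * real n powr (1 - \<kappa> * \<mu>)
       + 2 ^ n * (exp c * exp (- c * (\<mu> * real n * ln (real n))))"
proof -
  define W where "W = candidate_sets n \<alpha>"
  define f where "f V = allowed_fraction n k d V ^ m" for V
  have m_ge: "\<mu> * real n * ln (real n) - 1 \<le> real m"
    unfolding m_def using \<mu> n by (intro nat_floor_ge) simp
  have "\<delta> * real n \<le> real n" using \<delta> by (simp add: mult_left_le_one_le)
  then have "real k \<le> real n" using k_le(1) by linarith
  then have "k \<le> n" by (simp only: of_nat_le_iff)
  then have "measure_pmf.prob (random_graph n m k) {G. \<exists>V. small_stopping_set n m k d \<alpha> G V}
      \<le> (\<Sum>V\<in>W. f V)"
    unfolding W_def f_def by (rule prob_small_stopping_set_le)
  also have "\<dots> = (\<Sum>V\<in>{V\<in>W. real (card V) \<le> \<delta> * real n}. f V)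
      + (\<Sum>V\<in>{V\<in>W. \<not> real (card V) \<le> \<delta> * real n}. f V)"
    using sum.Int_Diff[of W f "{V. real (card V) \<le> \<delta> * real n}"]
    by (simp add: W_def finite_candidate_sets Int_def set_diff_eq)
  also have "(\<Sum>V\<in>{V\<in>W. real (card V) \<le> \<delta> * real n}. f V) \<le> 2 * exp (real k) * real n powr (1 - \<kappa> * \<mu>)"
    using small unfolding W_def f_def \<kappa>_def by (rule sum_small_sets_le[OF d k \<mu> \<delta> n k_le(1) m_ge])
  also have "(\<Sum>V\<in>{V\<in>W. \<not> real (card V) \<le> \<delta> * real n}. f V)
      \<le> (\<Sum>V\<in>{V\<in>W. \<not> real (card V) \<le> \<delta> * real n}. exp c * exp (- c * (\<mu> * real n * ln (real n))))"
  proof (rule sum_mono)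
    fix V assume "V \<in> {V\<in>W. \<not> real (card V) \<le> \<delta> * real n}"
    then have "V \<subseteq> {0..<n}" "\<delta> * real n < real (card V)" "real (card V) < \<alpha> * real n"
      by (auto simp: W_def candidate_sets_def)
    from large_set_bound[OF d k \<alpha> \<mu> \<delta>(1) n k_le(2) this m_ge]
    show "f V \<le> exp c * exp (- c * (\<mu> * real n * ln (real n)))"
      unfolding f_def c_def .
  qed
  also have "\<dots> \<le> 2 ^ n * (exp c * exp (- c * (\<mu> * real n * ln (real n))))"
  proof -
    have "card {V\<in>W. \<not> real (card V) \<le> \<delta> * real n} \<le> card (Pow {0..<n})"
      by (rule card_mono) (auto simp: W_def candidate_sets_def)
    then have "real (card {V\<in>W. \<not> real (card V) \<le> \<delta> * real n}) \<le> 2 ^ n"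
      by (simp add: card_Pow flip: of_nat_le_iff)
    then show ?thesis by (simp add: mult_right_mono)
  qed
  finally show ?thesis by simp
qed

lemma exists_good_delta:
  assumes k: "2 \<le> k" and \<mu>: "0 < \<mu>" and \<epsilon>: "0 < \<epsilon>" "\<epsilon> \<le> \<mu> * real k"
  shows "\<exists>\<delta>. 0 < \<delta> \<and> \<delta> \<le> 1/4 \<and> \<mu> * real k - \<epsilon> \<le> real k * (1 - 2 * \<delta>) ^ (k - 1) * \<mu>"
proof -
  define K where "K = real k"
  define \<delta> where "\<delta> = \<epsilon> / (2 * \<mu> * K * K)"
  have K: "2 \<le> K" unfolding K_def using k by simp
  have \<delta>_pos: "0 < \<delta>" unfolding \<delta>_def using \<epsilon> \<mu> K by simp
  have "\<delta> \<le> \<mu> * K / (2 * \<mu> * K * K)"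
    unfolding \<delta>_def using \<epsilon> \<mu> K by (intro divide_right_mono) (auto simp: K_def)
  also have "\<dots> = 1 / (2 * K)" using \<mu> K by (simp add: field_simps)
  also have "\<dots> \<le> 1/4" using K by (simp add: field_simps)
  finally have \<delta>_le: "\<delta> \<le> 1/4" .
  have "1 + real (k - 1) * (- 2 * \<delta>) \<le> (1 + (- 2 * \<delta>)) ^ (k - 1)"
    by (rule Bernoulli_inequality) (use \<delta>_le in simp)
  then have "1 - 2 * \<delta> * (K - 1) \<le> (1 - 2 * \<delta>) ^ (k - 1)"
    unfolding K_def using k by (simp add: of_nat_diff algebra_simps)
  then have "\<mu> * K * (1 - 2 * \<delta> * (K - 1)) \<le> \<mu> * K * (1 - 2 * \<delta>) ^ (k - 1)"
    using \<mu> K by (intro mult_left_mono) auto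
  moreover have "\<mu> * K * (1 - 2 * \<delta> * (K - 1)) = \<mu> * K - \<epsilon> * (K - 1) / K"
    unfolding \<delta>_def using \<mu> K by (simp add: field_simps)
  moreover have "\<epsilon> * (K - 1) / K \<le> \<epsilon>" using \<epsilon> K by (simp add: field_simps)
  ultimately have "\<mu> * real k - \<epsilon> \<le> real k * (1 - 2 * \<delta>) ^ (k - 1) * \<mu>"
    unfolding K_def by (simp add: mult_ac)
  then show ?thesis using \<delta>_pos \<delta>_le by blast
qed

lemma eventually_le_linear: "0 < (a::real) \<Longrightarrow> eventually (\<lambda>n::nat. C \<le> a * real n) at_top"
  by real_asymp

lemma eventually_powr_le_half: "(a::real) < 0 \<Longrightarrow> eventually (\<lambda>n::nat. real n powr a \<le> 1/2) at_top"
  by real_asymp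

lemma eventually_superexp_decay_le_powr:
  "0 < (b::real) \<Longrightarrow> 0 < C \<Longrightarrow>
    eventually (\<lambda>n::nat. C * 2 ^ n * exp (- b * real n * ln (real n)) \<le> real n powr a) at_top"
  by real_asymp

lemma eventually_prob_small_stopping_set_le:
  fixes k d :: nat and \<alpha> \<mu> \<delta> :: real
  defines "\<kappa> \<equiv> real k * (1 - 2 * \<delta>) ^ (k - 1)"
  assumes d: "2 \<le> d" and k: "1 \<le> k" and \<alpha>: "\<alpha> < 1" and \<mu>: "0 < \<mu>"
    and \<delta>: "0 < \<delta>" "\<delta> \<le> 1/4" and \<kappa>\<mu>: "1 < \<kappa> * \<mu>"
  shows "eventually (\<lambda>n. measure_pmf.prob (random_graph n (nat \<lfloor>\<mu> * real n * ln (real n)\<rfloor>) k)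
             {G. \<exists>V. small_stopping_set n (nat \<lfloor>\<mu> * real n * ln (real n)\<rfloor>) k d \<alpha> G V}
           \<le> (2 * exp (real k) + 1) * real n powr (1 - \<kappa> * \<mu>)) at_top"
proof -
  define c where "c = real k * \<delta> * ((1 - \<alpha>) / 2) ^ (k - 1)"
  have c: "0 < c" unfolding c_def using k \<alpha> \<delta> by simp
  have "eventually (\<lambda>n::nat. 2 \<le> n \<and> real k \<le> \<delta> * real n \<and> real k \<le> (1 - \<alpha>) / 2 * real n
      \<and> real n powr (1 - \<kappa> * \<mu>) \<le> 1/2
      \<and> exp c * 2 ^ n * exp (- (c * \<mu>) * real n * ln (real n)) \<le> real n powr (1 - \<kappa> * \<mu>)) at_top"
    using \<alpha> \<delta> \<kappa>\<mu> c \<mu>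
    by (intro eventually_conj eventually_ge_at_top eventually_le_linear eventually_powr_le_half
        eventually_superexp_decay_le_powr) auto
  then show ?thesis
  proof eventually_elim
    case (elim n)
    then have "2 ^ n * (exp c * exp (- c * (\<mu> * real n * ln (real n)))) \<le> real n powr (1 - \<kappa> * \<mu>)"
      by (simp add: mult_ac)
    with elim show ?case
      using prob_small_stopping_set_bound[OF d k \<alpha> \<mu> \<delta>, of n] unfolding c_def \<kappa>_def
      by (simp add: algebra_simps)
  qed
qed

theorem mainTheorem3:
  fixes k d :: nat and \<alpha> \<mu> \<epsilon> :: real
  assumes "k \<ge> 2" and "2 \<le> d" and "d \<le> k"
    and "0 < \<alpha>" and "\<alpha> < 1"
    and "\<mu> > 1 / real k"
    and "0 < \<epsilon>" and "\<epsilon> < \<mu> * real k - 1"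
  shows "(\<lambda>n. measure_pmf.prob (random_graph n (nat \<lfloor>\<mu> * real n * ln (real n)\<rfloor>) k)
             {G. \<exists>V. small_stopping_set n (nat \<lfloor>\<mu> * real n * ln (real n)\<rfloor>) k d \<alpha> G V})
         \<in> O(\<lambda>n. real n powr (1 - \<mu> * real k + \<epsilon>))"
proof -
  have "0 < 1 / real k" using assms(1) by simp
  then have \<mu>: "0 < \<mu>" using assms(6) by linarith
  obtain \<delta> where \<delta>: "0 < \<delta>" "\<delta> \<le> 1/4"
    and gain: "\<mu> * real k - \<epsilon> \<le> real k * (1 - 2 * \<delta>) ^ (k - 1) * \<mu>"
    using exists_good_delta[OF assms(1) \<mu> assms(7)] assms(8) by auto
  define \<kappa> where "\<kappa> = real k * (1 - 2 * \<delta>) ^ (k - 1)"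
  have "1 < \<kappa> * \<mu>" using gain assms(8) unfolding \<kappa>_def by linarith
  then have bound: "eventually (\<lambda>n. measure_pmf.prob (random_graph n (nat \<lfloor>\<mu> * real n * ln (real n)\<rfloor>) k)
             {G. \<exists>V. small_stopping_set n (nat \<lfloor>\<mu> * real n * ln (real n)\<rfloor>) k d \<alpha> G V}
           \<le> (2 * exp (real k) + 1) * real n powr (1 - \<kappa> * \<mu>)) at_top"
    unfolding \<kappa>_def using assms(1,2,5) \<mu> \<delta>
    by (intro eventually_prob_small_stopping_set_le) auto
  have "eventually (\<lambda>n. norm (measure_pmf.prob (random_graph n (nat \<lfloor>\<mu> * real n * ln (real n)\<rfloor>) k)
             {G. \<exists>V. small_stopping_set n (nat \<lfloor>\<mu> * real n * ln (real n)\<rfloor>) k d \<alpha> G V})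
           \<le> (2 * exp (real k) + 1) * norm (real n powr (1 - \<mu> * real k + \<epsilon>))) at_top"
    using bound eventually_ge_at_top[of 1]
  proof eventually_elim
    case (elim n)
    have "real n powr (1 - \<kappa> * \<mu>) \<le> real n powr (1 - \<mu> * real k + \<epsilon>)"
      using gain elim(2) unfolding \<kappa>_def by (intro powr_mono) auto
    then show ?case using elim(1) by (simp add: order_trans mult_left_mono)
  qed
  then show ?thesis by (rule bigoI)
qed

end
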